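(* Let $\mathcal{C}$ be a simplicial complex on $[n]$ and $p\ge1$. Then $\mathcal{C}$ is unimodular if and only if $G^p(\mathcal{C})$ is unimodular.
   Context: A simplicial complex on $[n]$ is a family of subsets of $[n]$ closed under subsets; facets are inclusion-maximal faces. $G^p(\mathcal{C})$ denotes the same family of faces as $\mathcal{C}$ but regarded as a complex on ground set $[n+p]$ (so $n+1,\dots,n+p$ lie in no face). $\mathcal{A}_{\mathcal{C}}$ is the $0/1$ matrix with columns indexed by $\mathbf{i}\in\{1,2\}^{\text{ground set}}$ and rows indexed by pairs $(F,\mathbf{e})$, $F$ a facet, $\mathbf{e}\in\{1,2\}^F$; entry $1$ iff $\mathbf{e}=\mathbf{i}|_F$. An integer matrix is unimodular if every circuit (nonzero integer kernel vector with coprime entries and inclusion-minimal support) has entries in $\{0,\pm1\}$; a complex is unimodular if its matrix $\mathcal{A}$ is. *)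

theory Defs
  imports "HOL-Library.FuncSet"
begin

definition supp_vec :: "'c set \<Rightarrow> ('c \<Rightarrow> int) \<Rightarrow> 'c set" where
  "supp_vec Cs v = {c \<in> Cs. v c \<noteq> 0}"

definition in_int_kernel :: "'r set \<Rightarrow> 'c set \<Rightarrow> ('r \<Rightarrow> 'c \<Rightarrow> int) \<Rightarrow> ('c \<Rightarrow> int) \<Rightarrow> bool" where
  "in_int_kernel R Cs A v \<longleftrightarrow>
     (\<forall>c. c \<notin> Cs \<longrightarrow> v c = 0) \<and> (\<forall>r\<in>R. (\<Sum>c\<in>Cs. A r c * v c) = 0)"

definition is_circuit :: "'r set \<Rightarrow> 'c set \<Rightarrow> ('r \<Rightarrow> 'c \<Rightarrow> int) \<Rightarrow> ('c \<Rightarrow> int) \<Rightarrow> bool" where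
  "is_circuit R Cs A v \<longleftrightarrow>
     in_int_kernel R Cs A v \<and> supp_vec Cs v \<noteq> {} \<and> Gcd (v ` Cs) = 1 \<and>
     (\<forall>w. in_int_kernel R Cs A w \<and> supp_vec Cs w \<noteq> {} \<and> supp_vec Cs w \<subseteq> supp_vec Cs v
          \<longrightarrow> supp_vec Cs w = supp_vec Cs v)"

definition unimodular_matrix :: "'r set \<Rightarrow> 'c set \<Rightarrow> ('r \<Rightarrow> 'c \<Rightarrow> int) \<Rightarrow> bool" where
  "unimodular_matrix R Cs A \<longleftrightarrow>
     (\<forall>v. is_circuit R Cs A v \<longrightarrow> (\<forall>c\<in>Cs. v c \<in> {-1, 0, 1}))"

definition simplicial_complex :: "nat \<Rightarrow> nat set set \<Rightarrow> bool" where
  "simplicial_complex n C \<longleftrightarrow> (\<forall>F\<in>C. F \<subseteq> {1..n}) \<and> (\<forall>F\<in>C. \<forall>G. G \<subseteq> F \<longrightarrow> G \<in> C)"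

definition facets :: "nat set set \<Rightarrow> nat set set" where
  "facets C = {F \<in> C. \<forall>G\<in>C. F \<subseteq> G \<longrightarrow> G = F}"

text \<open>Complex C regarded on the ground set [m] = {1..m}.
Columns: i in {1,2}^[m]; rows: (F,e) with F a facet, e in {1,2}^F.\<close>

definition cplx_cols :: "nat \<Rightarrow> (nat \<Rightarrow> nat) set" where
  "cplx_cols m = PiE {1..m} (\<lambda>_. {1,2})"

definition cplx_rows :: "nat set set \<Rightarrow> (nat set \<times> (nat \<Rightarrow> nat)) set" where
  "cplx_rows C = {(F, e). F \<in> facets C \<and> e \<in> PiE F (\<lambda>_. {1,2})}"

definition cplx_matrix :: "nat set \<times> (nat \<Rightarrow> nat) \<Rightarrow> (nat \<Rightarrow> nat) \<Rightarrow> int" where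
  "cplx_matrix r i = (if snd r = restrict i (fst r) then 1 else 0)"

definition unimodular_complex :: "nat \<Rightarrow> nat set set \<Rightarrow> bool" where
  "unimodular_complex m C \<longleftrightarrow> unimodular_matrix (cplx_rows C) (cplx_cols m) cplx_matrix"

text \<open>G^p(C): same faces, ground set [n+p]; represented as (ground size, faces).\<close>
definition G_ext :: "nat \<Rightarrow> nat \<Rightarrow> nat set set \<Rightarrow> nat \<times> nat set set" where
  "G_ext p n C = (n + p, C)"

end

theory Submission
  imports Defs
begin

text \<open>The matrix of \<open>G\<^sup>p(C)\<close> is the matrix of \<open>C\<close> with every column repeated \<open>2\<^sup>p\<close> times,
since a facet of \<open>C\<close> does not see the coordinates \<open>n+1, \<dots>, n+p\<close>. Repeating columns preserves
unimodularity: a circuit meeting two copies of the same column is \<open>\<plusminus>(e\<^sub>a - e\<^sub>b)\<close>, and a circuit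
meeting every column at most once is a circuit of the original matrix, read through the copies;
conversely every circuit of the original matrix reappears on one copy of each column.\<close>

lemma in_int_kernel_vanishes_outside_supp:
  "in_int_kernel R Cs A v \<Longrightarrow> c \<notin> supp_vec Cs v \<Longrightarrow> v c = 0"
  by (cases "c \<in> Cs") (auto simp: in_int_kernel_def supp_vec_def)

lemma supp_vec_superset:
  "S \<subseteq> Cs \<Longrightarrow> (\<And>c. c \<notin> S \<Longrightarrow> v c = 0) \<Longrightarrow> supp_vec Cs v = supp_vec S v"
  by (auto simp: supp_vec_def)

lemma Gcd_image_superset:
  fixes v :: "'c \<Rightarrow> int"
  assumes "S \<subseteq> Cs" and "\<And>c. c \<notin> S \<Longrightarrow> v c = 0"
  shows "Gcd (v ` Cs) = Gcd (v ` S)"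
proof (cases "Cs \<subseteq> S")
  case True
  with assms(1) show ?thesis by (simp add: subset_antisym)
next
  case False
  then obtain c where "c \<in> Cs" "c \<notin> S" by blast
  with assms have "v ` Cs = insert 0 (v ` S)" by force
  then show ?thesis by simp
qed

lemma in_int_kernel_superset_iff:
  assumes "finite Cs" and "S \<subseteq> Cs" and "\<And>c. c \<notin> S \<Longrightarrow> v c = 0"
  shows "in_int_kernel R S A v \<longleftrightarrow> in_int_kernel R Cs A v"
proof -
  have "(\<Sum>c\<in>S. A r c * v c) = (\<Sum>c\<in>Cs. A r c * v c)" for r
    by (rule sum.mono_neutral_left) (use assms in auto)
  with assms(2,3) show ?thesis by (auto simp: in_int_kernel_def)
qed

lemma is_circuit_superset_iff:
  assumes "finite Cs" and "S \<subseteq> Cs" and v: "\<And>c. c \<notin> S \<Longrightarrow> v c = 0"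
  shows "is_circuit R S A v \<longleftrightarrow> is_circuit R Cs A v"
proof -
  note supp = supp_vec_superset[OF assms(2)]
  note kernel = in_int_kernel_superset_iff[OF assms(1,2)]
  have vanish_S: "\<And>c. c \<notin> S \<Longrightarrow> w c = 0" if "in_int_kernel R S A w" for w
    using that by (simp add: in_int_kernel_def)
  have vanish_Cs: "\<And>c. c \<notin> S \<Longrightarrow> w c = 0"
    if "in_int_kernel R Cs A w" "supp_vec Cs w \<subseteq> supp_vec Cs v" for w
    using that v by (fastforce simp: in_int_kernel_def supp_vec_def)
  have below_v: "(in_int_kernel R S A w \<and> supp_vec S w \<subseteq> supp_vec S v) \<longleftrightarrow>
      (in_int_kernel R Cs A w \<and> supp_vec Cs w \<subseteq> supp_vec Cs v)" for w
  proof
    assume w: "in_int_kernel R S A w \<and> supp_vec S w \<subseteq> supp_vec S v"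
    then have w0: "\<And>c. c \<notin> S \<Longrightarrow> w c = 0" using vanish_S by blast
    with w show "in_int_kernel R Cs A w \<and> supp_vec Cs w \<subseteq> supp_vec Cs v"
      by (simp add: kernel[where v=w, OF w0] supp[where v=w, OF w0] supp[where v=v, OF v])
  next
    assume w: "in_int_kernel R Cs A w \<and> supp_vec Cs w \<subseteq> supp_vec Cs v"
    then have w0: "\<And>c. c \<notin> S \<Longrightarrow> w c = 0" using vanish_Cs by blast
    with w show "in_int_kernel R S A w \<and> supp_vec S w \<subseteq> supp_vec S v"
      by (simp add: kernel[where v=w, OF w0] supp[where v=w, OF w0] supp[where v=v, OF v])
  qed
  have supp_w: "supp_vec Cs w = supp_vec S w" if "in_int_kernel R S A w" for w
    using supp vanish_S[OF that] by blast
  have minimal: "(\<forall>w. in_int_kernel R S A w \<and> supp_vec S w \<noteq> {} \<and> supp_vec S w \<subseteq> supp_vec S v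
        \<longrightarrow> supp_vec S w = supp_vec S v) \<longleftrightarrow>
      (\<forall>w. in_int_kernel R Cs A w \<and> supp_vec Cs w \<noteq> {} \<and> supp_vec Cs w \<subseteq> supp_vec Cs v
        \<longrightarrow> supp_vec Cs w = supp_vec Cs v)"
  proof (intro iff_allI)
    fix w
    show "(in_int_kernel R S A w \<and> supp_vec S w \<noteq> {} \<and> supp_vec S w \<subseteq> supp_vec S v
        \<longrightarrow> supp_vec S w = supp_vec S v) \<longleftrightarrow>
      (in_int_kernel R Cs A w \<and> supp_vec Cs w \<noteq> {} \<and> supp_vec Cs w \<subseteq> supp_vec Cs v
        \<longrightarrow> supp_vec Cs w = supp_vec Cs v)"
      using below_v[of w] supp_w[of w] supp[where v=v, OF v] by auto
  qed
  show ?thesis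
    unfolding is_circuit_def
    by (simp add: minimal kernel[where v=v, OF v] supp[where v=v, OF v]
        Gcd_image_superset[OF assms(2) v])
qed

lemma supp_vec_reindex:
  assumes "bij_betw h S T" and "\<And>x. x \<in> S \<Longrightarrow> w (h x) = v x"
  shows "supp_vec T w = h ` supp_vec S v"
  using assms by (auto simp: supp_vec_def bij_betw_def)

lemma in_int_kernel_reindex:
  assumes h: "bij_betw h S T" and B: "\<And>r x. r \<in> R \<Longrightarrow> x \<in> S \<Longrightarrow> B r (h x) = A r x"
    and wv: "\<And>x. x \<in> S \<Longrightarrow> w (h x) = v x"
    and v: "\<And>x. x \<notin> S \<Longrightarrow> v x = 0" and w: "\<And>y. y \<notin> T \<Longrightarrow> w y = 0"
  shows "in_int_kernel R T B w \<longleftrightarrow> in_int_kernel R S A v"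
proof -
  have "(\<Sum>y\<in>T. B r y * w y) = (\<Sum>x\<in>S. A r x * v x)" if "r \<in> R" for r
  proof -
    have "(\<Sum>y\<in>T. B r y * w y) = (\<Sum>x\<in>S. B r (h x) * w (h x))"
      by (rule sum.reindex_bij_betw[OF h, symmetric])
    also have "\<dots> = (\<Sum>x\<in>S. A r x * v x)"
      using B[OF that] wv by simp
    finally show ?thesis .
  qed
  with v w show ?thesis by (auto simp: in_int_kernel_def)
qed

lemma is_circuit_reindex:
  assumes h: "bij_betw h S T" and B: "\<And>r x. r \<in> R \<Longrightarrow> x \<in> S \<Longrightarrow> B r (h x) = A r x"
    and wv: "\<And>x. x \<in> S \<Longrightarrow> w (h x) = v x" and w: "\<And>y. y \<notin> T \<Longrightarrow> w y = 0"
    and circuit: "is_circuit R S A v"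
  shows "is_circuit R T B w"
proof -
  have kernel_v: "in_int_kernel R S A v" and minimal_v:
    "\<And>u. in_int_kernel R S A u \<Longrightarrow> supp_vec S u \<noteq> {} \<Longrightarrow> supp_vec S u \<subseteq> supp_vec S v
      \<Longrightarrow> supp_vec S u = supp_vec S v"
    using circuit by (auto simp: is_circuit_def)
  have v: "\<And>x. x \<notin> S \<Longrightarrow> v x = 0"
    using kernel_v by (simp add: in_int_kernel_def)
  have supp_w: "supp_vec T w = h ` supp_vec S v"
    by (rule supp_vec_reindex[OF h]) (rule wv)
  have "w ` T = v ` S"
    using h wv by (force simp: bij_betw_def)
  moreover have "in_int_kernel R T B w \<longleftrightarrow> in_int_kernel R S A v"
    by (rule in_int_kernel_reindex[OF h]) (use B wv v w in auto)
  moreover have "supp_vec T w' = supp_vec T w"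
    if kernel_w': "in_int_kernel R T B w'" and "supp_vec T w' \<noteq> {}"
      and "supp_vec T w' \<subseteq> supp_vec T w" for w'
  proof -
    define v' where "v' x = (if x \<in> S then w' (h x) else 0)" for x
    have w': "\<And>y. y \<notin> T \<Longrightarrow> w' y = 0"
      using kernel_w' by (simp add: in_int_kernel_def)
    have "in_int_kernel R T B w' \<longleftrightarrow> in_int_kernel R S A v'"
      by (rule in_int_kernel_reindex[OF h]) (use B w' in \<open>auto simp: v'_def\<close>)
    with kernel_w' have "in_int_kernel R S A v'" by simp
    moreover have supp_w': "supp_vec T w' = h ` supp_vec S v'"
      by (rule supp_vec_reindex[OF h]) (simp add: v'_def)
    moreover have "supp_vec S v' \<subseteq> supp_vec S v"
    proof
      fix x assume x: "x \<in> supp_vec S v'"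
      then have "h x \<in> h ` supp_vec S v" using that(3) supp_w supp_w' by blast
      then obtain y where "y \<in> supp_vec S v" "h x = h y" by blast
      with x h show "x \<in> supp_vec S v" by (auto simp: bij_betw_def supp_vec_def dest: inj_onD)
    qed
    ultimately have "supp_vec S v' = supp_vec S v"
      using minimal_v that(2) by auto
    with supp_w supp_w' show ?thesis by simp
  qed
  ultimately show ?thesis
    using circuit kernel_v supp_w by (auto simp: is_circuit_def)
qed

lemma circuit_through_equal_columns:
  assumes "finite Cs" and circuit: "is_circuit R Cs A v"
    and a: "a \<in> supp_vec Cs v" and b: "b \<in> supp_vec Cs v" and "a \<noteq> b"
    and equal: "\<And>r. r \<in> R \<Longrightarrow> A r a = A r b"
  shows "v c \<in> {-1, 0, 1}"
proof -
  have kernel_v: "in_int_kernel R Cs A v" and Gcd_v: "Gcd (v ` Cs) = 1" and minimal_v: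
    "\<And>u. in_int_kernel R Cs A u \<Longrightarrow> supp_vec Cs u \<noteq> {} \<Longrightarrow> supp_vec Cs u \<subseteq> supp_vec Cs v
      \<Longrightarrow> supp_vec Cs u = supp_vec Cs v"
    using circuit by (auto simp: is_circuit_def)
  have ab: "{a, b} \<subseteq> Cs" using a b by (auto simp: supp_vec_def)
  have kernel_ab: "in_int_kernel R Cs A u \<longleftrightarrow> (\<forall>r\<in>R. A r a * u a + A r b * u b = 0)"
    if u: "\<And>c. c \<notin> {a, b} \<Longrightarrow> u c = 0" for u
  proof -
    have "in_int_kernel R {a, b} A u \<longleftrightarrow> in_int_kernel R Cs A u"
      by (rule in_int_kernel_superset_iff[OF assms(1) ab]) (rule u)
    with u \<open>a \<noteq> b\<close> show ?thesis by (simp add: in_int_kernel_def)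
  qed
  define e where "e c = (if c = a then 1 else if c = b then -1 else 0 :: int)" for c
  have "in_int_kernel R Cs A e"
    using \<open>a \<noteq> b\<close> equal by (subst kernel_ab) (auto simp: e_def)
  moreover have "supp_vec Cs e = {a, b}"
    using ab \<open>a \<noteq> b\<close> by (auto simp: supp_vec_def e_def)
  ultimately have supp_v: "supp_vec Cs v = {a, b}"
    using minimal_v[of e] a b by auto
  then have v: "\<And>c. c \<notin> {a, b} \<Longrightarrow> v c = 0"
    using in_int_kernel_vanishes_outside_supp[OF kernel_v] by blast
  obtain r where "r \<in> R" and "A r a \<noteq> 0"
    \<comment> \<open>otherwise the unit vector at \<open>a\<close> is a kernel vector of smaller support\<close>
  proof (rule ccontr)
    assume "\<not> thesis"
    with that have zero: "\<And>r. r \<in> R \<Longrightarrow> A r a = 0" by blast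
    define u where "u c = (if c = a then 1 else 0 :: int)" for c
    have "in_int_kernel R Cs A u"
      using zero by (subst kernel_ab) (auto simp: u_def)
    moreover have "supp_vec Cs u = {a}"
      using ab by (auto simp: supp_vec_def u_def)
    ultimately show False
      using minimal_v[of u] supp_v \<open>a \<noteq> b\<close> by auto
  qed
  moreover have "\<forall>r\<in>R. A r a * v a + A r b * v b = 0"
    using kernel_ab[of v] v kernel_v by blast
  ultimately have "A r a * (v a + v b) = 0"
    using equal by (simp add: algebra_simps)
  with \<open>A r a \<noteq> 0\<close> have "v b = - v a" by simp
  moreover have "Gcd (v ` Cs) = \<bar>v a\<bar>"
    using Gcd_image_superset[OF ab v] \<open>v b = - v a\<close> by simp
  ultimately show ?thesis
    using Gcd_v v[of c] by (cases "c = a \<or> c = b") (auto simp: abs_if split: if_splits)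
qed

lemma unimodular_matrix_duplicate_columns:
  assumes "finite Cs" and "finite Ds" and "\<pi> ` Ds \<subseteq> Cs"
    and B: "\<And>r d. r \<in> R \<Longrightarrow> d \<in> Ds \<Longrightarrow> B r d = A r (\<pi> d)"
    and unimodular: "unimodular_matrix R Cs A"
  shows "unimodular_matrix R Ds B"
  unfolding unimodular_matrix_def
proof (intro allI impI ballI)
  fix w d
  assume circuit: "is_circuit R Ds B w" and "d \<in> Ds"
  define S where "S = supp_vec Ds w"
  have "S \<subseteq> Ds" by (auto simp: S_def supp_vec_def)
  have w: "\<And>d. d \<notin> S \<Longrightarrow> w d = 0"
    using in_int_kernel_vanishes_outside_supp[of R Ds B w] circuit
    by (simp add: is_circuit_def S_def)
  show "w d \<in> {-1, 0, 1}"
  proof (cases "inj_on \<pi> S")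
    case False
    then obtain a b where ab: "a \<in> S" "b \<in> S" "a \<noteq> b" and "\<pi> a = \<pi> b"
      by (auto simp: inj_on_def)
    have "B r a = B r b" if "r \<in> R" for r
      using B[OF that] \<open>\<pi> a = \<pi> b\<close> ab \<open>S \<subseteq> Ds\<close> by (metis subsetD)
    with ab show ?thesis
      unfolding S_def by (rule circuit_through_equal_columns[OF assms(2) circuit])
  next
    case True
    then have h: "bij_betw \<pi> S (\<pi> ` S)" by (rule inj_on_imp_bij_betw)
    define v where "v c = (if c \<in> \<pi> ` S then w (the_inv_into S \<pi> c) else 0)" for c
    have "is_circuit R S B w"
      using is_circuit_superset_iff[OF assms(2) \<open>S \<subseteq> Ds\<close>] w circuit by blast
    then have "is_circuit R (\<pi> ` S) A v"
      by (rule is_circuit_reindex[OF h, rotated -1])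
        (use B \<open>S \<subseteq> Ds\<close> True in \<open>auto simp: v_def the_inv_into_f_f\<close>)
    moreover have "\<pi> ` S \<subseteq> Cs" using \<open>S \<subseteq> Ds\<close> assms(3) by blast
    then have "is_circuit R (\<pi> ` S) A v \<longleftrightarrow> is_circuit R Cs A v"
      by (rule is_circuit_superset_iff[OF assms(1)]) (simp add: v_def)
    ultimately have "is_circuit R Cs A v" by simp
    then have "v (\<pi> d) \<in> {-1, 0, 1}"
      using unimodular \<open>d \<in> Ds\<close> assms(3) by (auto simp: unimodular_matrix_def)
    then show ?thesis
      using w[of d] True by (cases "d \<in> S") (auto simp: v_def the_inv_into_f_f)
  qed
qed

lemma unimodular_matrix_of_duplicate_columns:
  assumes "finite Cs" and "finite Ds" and "Cs \<subseteq> \<pi> ` Ds"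
    and B: "\<And>r d. r \<in> R \<Longrightarrow> d \<in> Ds \<Longrightarrow> B r d = A r (\<pi> d)"
    and unimodular: "unimodular_matrix R Ds B"
  shows "unimodular_matrix R Cs A"
  unfolding unimodular_matrix_def
proof (intro allI impI ballI)
  fix v c
  assume circuit: "is_circuit R Cs A v" and "c \<in> Cs"
  define S where "S = supp_vec Cs v"
  define \<sigma> where "\<sigma> = inv_into Ds \<pi>"
  have "S \<subseteq> Cs" by (auto simp: S_def supp_vec_def)
  then have S: "S \<subseteq> \<pi> ` Ds" using assms(3) by blast
  have v: "\<And>c. c \<notin> S \<Longrightarrow> v c = 0"
    using in_int_kernel_vanishes_outside_supp[of R Cs A v] circuit
    by (simp add: is_circuit_def S_def)
  have \<sigma>_into: "\<sigma> ` S \<subseteq> Ds" and \<pi>_\<sigma>: "\<And>x. x \<in> S \<Longrightarrow> \<pi> (\<sigma> x) = x"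
    using S by (auto simp: \<sigma>_def inv_into_into f_inv_into_f)
  have h: "bij_betw \<sigma> S (\<sigma> ` S)"
    using inj_on_inv_into[OF S] by (simp add: \<sigma>_def inj_on_imp_bij_betw)
  define w where "w d = (if d \<in> \<sigma> ` S then v (\<pi> d) else 0)" for d
  have "is_circuit R S A v"
    using is_circuit_superset_iff[OF assms(1) \<open>S \<subseteq> Cs\<close>] v circuit by blast
  then have "is_circuit R (\<sigma> ` S) B w"
    by (rule is_circuit_reindex[OF h, rotated -1])
      (use B \<sigma>_into \<pi>_\<sigma> in \<open>auto simp: w_def\<close>)
  moreover have "is_circuit R (\<sigma> ` S) B w \<longleftrightarrow> is_circuit R Ds B w"
    by (rule is_circuit_superset_iff[OF assms(2) \<sigma>_into]) (simp add: w_def)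
  ultimately have "is_circuit R Ds B w" by simp
  then have "w (\<sigma> c) \<in> {-1, 0, 1}" if "c \<in> S"
    using unimodular \<sigma>_into that by (auto simp: unimodular_matrix_def)
  then show "v c \<in> {-1, 0, 1}"
    using v[of c] \<pi>_\<sigma> by (cases "c \<in> S") (auto simp: w_def)
qed

lemma unimodular_matrix_duplicate_columns_iff:
  assumes "finite Cs" and "finite Ds" and "\<pi> ` Ds = Cs"
    and "\<And>r d. r \<in> R \<Longrightarrow> d \<in> Ds \<Longrightarrow> B r d = A r (\<pi> d)"
  shows "unimodular_matrix R Ds B \<longleftrightarrow> unimodular_matrix R Cs A"
  using unimodular_matrix_duplicate_columns[of Cs Ds \<pi> R B A]
    unimodular_matrix_of_duplicate_columns[of Cs Ds \<pi> R B A] assms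
  by blast

lemma finite_cplx_cols: "finite (cplx_cols m)"
  by (simp add: cplx_cols_def finite_PiE)

lemma restrict_image_cplx_cols:
  assumes "n \<le> m"
  shows "(\<lambda>i. restrict i {1..n}) ` cplx_cols m = cplx_cols n"
proof
  show "(\<lambda>i. restrict i {1..n}) ` cplx_cols m \<subseteq> cplx_cols n"
    using assms by (auto simp: cplx_cols_def PiE_iff)
next
  show "cplx_cols n \<subseteq> (\<lambda>i. restrict i {1..n}) ` cplx_cols m"
  proof
    fix i assume i: "i \<in> cplx_cols n"
    define j where "j = restrict (\<lambda>x. if x \<le> n then i x else 1) {1..m}"
    have "j \<in> cplx_cols m"
      using i by (auto simp: cplx_cols_def j_def PiE_iff)
    moreover have "restrict j {1..n} = i"
      using i assms by (auto simp: cplx_cols_def j_def PiE_iff extensional_def)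
    ultimately show "i \<in> (\<lambda>i. restrict i {1..n}) ` cplx_cols m"
      by (metis image_eqI)
  qed
qed

lemma cplx_matrix_restrict:
  assumes "simplicial_complex n C" and "r \<in> cplx_rows C"
  shows "cplx_matrix r (restrict i {1..n}) = cplx_matrix r i"
proof -
  have "fst r \<subseteq> {1..n}"
    using assms by (auto simp: simplicial_complex_def cplx_rows_def facets_def)
  then show ?thesis
    by (simp add: cplx_matrix_def restrict_restrict Int_absorb1)
qed

theorem proposition3p17:
  fixes n p :: nat and C :: "nat set set"
  assumes "simplicial_complex n C" and "p \<ge> 1"
  shows "unimodular_complex n C \<longleftrightarrow> case_prod unimodular_complex (G_ext p n C)"
proof -
  have "unimodular_matrix (cplx_rows C) (cplx_cols (n + p)) cplx_matrix \<longleftrightarrow>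
      unimodular_matrix (cplx_rows C) (cplx_cols n) cplx_matrix"
  proof (rule unimodular_matrix_duplicate_columns_iff[where \<pi> = "\<lambda>i. restrict i {1..n}"])
    show "(\<lambda>i. restrict i {1..n}) ` cplx_cols (n + p) = cplx_cols n"
      by (rule restrict_image_cplx_cols) simp
    show "cplx_matrix r i = cplx_matrix r (restrict i {1..n})" if "r \<in> cplx_rows C" for r i
      using cplx_matrix_restrict[OF assms(1) that] by simp
  qed (rule finite_cplx_cols)+
  then show ?thesis
    by (simp add: G_ext_def unimodular_complex_def)
qed

end
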